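(* Let $r\in\mathbb Z_+$ be even and $\Gamma=\Gamma_{(r,r)}$. If $E\in\mathcal C_\Gamma\setminus\{-4,0,4\}$, then $E\in\operatorname{int}B_j^\Gamma$ for some $j$.
   Context: For $r\ge3$ and $\theta\in\mathbb R$, $\Delta_\theta^r\in\mathbb C^{r\times r}$ is the Hermitian matrix with $1$ on the sub- and superdiagonals, $0$ on the diagonal, entry $e^{-i\theta}$ in position $(1,r)$ and $e^{i\theta}$ in position $(r,1)$, all other entries $0$; $\Delta_\theta^2=\begin{bmatrix}0&1+e^{-i\theta}\\1+e^{i\theta}&0\end{bmatrix}$. $\Gamma=\Gamma_{(r,r)}=([0,r)\times[0,r))\cap\mathbb Z^2$, $\Delta^\Gamma_{\theta,\varphi}=\Delta_\theta^r\otimes I_r+I_r\otimes\Delta_\varphi^r$, with eigenvalues $\lambda_1^\Gamma(\theta,\varphi)\le\cdots\le\lambda_{r^2}^\Gamma(\theta,\varphi)$ counted with multiplicity, and bands $B_j^\Gamma=\{\lambda_j^\Gamma(\theta,\varphi):(\theta,\varphi)\in[0,\pi]^2\}$. $\mathcal C_r=\{2\cos(\pi j/r): j\in\mathbb Z,\ 0\le j\le r\}$ and $\mathcal C_\Gamma=\{a+b:a,b\in\mathcal C_r\}$. *)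

theory Defs
  imports "HOL-Analysis.Analysis" "Jordan_Normal_Form.Char_Poly"
begin

(* Delta_theta^r, 0-indexed: rows/cols 0..r-1. Entry (1,r) of the paper is (0, r-1) here. *)
definition Delta :: "nat \<Rightarrow> real \<Rightarrow> complex mat" where
  "Delta r \<theta> =
     (if r = 2 then
        mat 2 2 (\<lambda>(i,j). if i = 0 \<and> j = 1 then 1 + cis (-\<theta>)
                         else if i = 1 \<and> j = 0 then 1 + cis \<theta> else 0)
      else
        mat r r (\<lambda>(i,j). if j = i + 1 \<or> i = j + 1 then 1
                         else if i = 0 \<and> j = r - 1 then cis (-\<theta>)
                         else if i = r - 1 \<and> j = 0 then cis \<theta> else 0))"

(* Kronecker product of an m x m and an n x n matrix; index (a,b) \<mapsto> a*n+b *)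
definition kron :: "complex mat \<Rightarrow> complex mat \<Rightarrow> complex mat" where
  "kron A B = mat (dim_row A * dim_row B) (dim_col A * dim_col B)
     (\<lambda>(i,j). A $$ (i div dim_row B, j div dim_col B) * B $$ (i mod dim_row B, j mod dim_col B))"

definition DeltaGamma :: "nat \<Rightarrow> real \<Rightarrow> real \<Rightarrow> complex mat" where
  "DeltaGamma r \<theta> \<phi> = kron (Delta r \<theta>) (1\<^sub>m r) + kron (1\<^sub>m r) (Delta r \<phi>)"

(* eigenvalues of a Hermitian matrix counted with (algebraic) multiplicity, in increasing order;
   lambda k A is the k-th smallest one (1-indexed) *)
definition eigs_sorted :: "complex mat \<Rightarrow> real list" where
  "eigs_sorted A = sorted_list_of_multiset (image_mset Re (proots (char_poly A)))"

definition lam :: "nat \<Rightarrow> complex mat \<Rightarrow> real" where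
  "lam k A = eigs_sorted A ! (k - 1)"

definition band :: "nat \<Rightarrow> nat \<Rightarrow> real set" where
  "band r j = {lam j (DeltaGamma r \<theta> \<phi>) | \<theta> \<phi>. \<theta> \<in> {0..pi} \<and> \<phi> \<in> {0..pi}}"

definition Cr :: "nat \<Rightarrow> real set" where
  "Cr r = {2 * cos (pi * real j / real r) | j. j \<le> r}"

definition CGamma :: "nat \<Rightarrow> real set" where
  "CGamma r = {a + b | a b. a \<in> Cr r \<and> b \<in> Cr r}"

end

theory Submission
  imports Defs
begin

(*
  Conjugating by a discrete Fourier matrix diagonalises \<Delta>\<^sub>\<theta>\<^sup>r with entries 2 cos ((\<theta> + 2\<pi>k)/r),
  so the eigenvalues of \<Delta>\<^sup>\<Gamma>\<^sub>\<theta>\<^sub>,\<^sub>\<phi> are the sums 2 cos ((\<theta> + 2\<pi>k)/r) + 2 cos ((\<phi> + 2\<pi>l)/r).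
  A point E = 2 cos (\<pi>a/r) + 2 cos (\<pi>b/r) of C\<^sub>\<Gamma> with 0 < b < r is such an eigenvalue at a corner
  of [0,\<pi>]\<^sup>2. Leave the corner along two curves that agree to first order, chosen so that this
  eigenvalue is stationary and has opposite second-order terms on the two curves. For the other
  eigenvalues equal to E at the corner, E \<notin> {-4,0,4} excludes the case where both sines vanish, and
  an elementary identity shows that their second-order term on the uncurved path has the sign of -E.
  Comparing second-order expansions, for small parameters fewer eigenvalues are \<le> E at the end of
  one curve than are < E at the end of the other. The ordered eigenvalues depend continuously on
  (\<theta>,\<phi>), so the intermediate value theorem puts an open interval around E into a single band.
*)

section \<open>Kronecker products\<close>

lemma sum_lessThan_mult_div_mod:
  fixes g :: "nat \<Rightarrow> nat \<Rightarrow> 'a::comm_monoid_add"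
  assumes "n > 0"
  shows "(\<Sum>t<m*n. g (t div n) (t mod n)) = (\<Sum>a<m. \<Sum>b<n. g a b)"
proof -
  have "bij_betw (\<lambda>(a,b). a*n+b) ({..<m}\<times>{..<n}) {..<m*n}"
  proof (rule bij_betw_byWitness[where f' = "\<lambda>t. (t div n, t mod n)"])
    show "(\<lambda>(a, b). a * n + b) ` ({..<m} \<times> {..<n}) \<subseteq> {..<m * n}"
    proof clarsimp
      fix a b assume "a < m" "b < n"
      then have "a*n + b < (a+1)*n" by simp
      also have "\<dots> \<le> m*n" using \<open>a < m\<close> by (intro mult_right_mono) auto
      finally show "a*n + b < m*n" .
    qed
  qed (use assms in \<open>auto simp: less_mult_imp_div_less\<close>)
  then have "(\<Sum>t<m*n. g (t div n) (t mod n)) = (\<Sum>(a,b)\<in>{..<m}\<times>{..<n}. g ((a*n+b) div n) ((a*n+b) mod n))"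
    by (subst sum.reindex_bij_betw[symmetric]) (auto simp: split_beta)
  also have "\<dots> = (\<Sum>(a,b)\<in>{..<m}\<times>{..<n}. g a b)"
    using assms by (intro sum.cong) auto
  finally show ?thesis by (simp add: sum.cartesian_product)
qed

lemma index_mult_mat_sum:
  assumes "A \<in> carrier_mat a b" "B \<in> carrier_mat b c" "i < a" "j < c"
  shows "(A * B) $$ (i,j) = (\<Sum>t<b. A $$ (i,t) * B $$ (t,j))"
  using assms by (auto simp: scalar_prod_def lessThan_atLeast0 intro!: sum.cong)

lemma kron_carrier_mat:
  "A \<in> carrier_mat m m \<Longrightarrow> B \<in> carrier_mat n n \<Longrightarrow> kron A B \<in> carrier_mat (m*n) (m*n)"
  by (auto simp: kron_def)

lemma index_kron:
  "A \<in> carrier_mat m m \<Longrightarrow> B \<in> carrier_mat n n \<Longrightarrow> i < m*n \<Longrightarrow> j < m*n \<Longrightarrow>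
   kron A B $$ (i,j) = A $$ (i div n, j div n) * B $$ (i mod n, j mod n)"
  by (auto simp: kron_def)

lemma kron_mult:
  assumes A: "A \<in> carrier_mat m m" and C: "C \<in> carrier_mat m m"
    and B: "B \<in> carrier_mat n n" and D: "D \<in> carrier_mat n n"
  shows "kron A B * kron C D = kron (A * C) (B * D)"
proof (rule eq_matI)
  show "dim_row (kron A B * kron C D) = dim_row (kron (A * C) (B * D))"
       "dim_col (kron A B * kron C D) = dim_col (kron (A * C) (B * D))"
    using A B C D by (auto simp: kron_def)
  fix i j assume "i < dim_row (kron (A * C) (B * D))" "j < dim_col (kron (A * C) (B * D))"
  then have ij: "i < m*n" "j < m*n" using A B C D by (auto simp: kron_def)
  then have n: "n > 0" by (cases n) auto
  have "(kron A B * kron C D) $$ (i,j) = (\<Sum>t<m*n. kron A B $$ (i,t) * kron C D $$ (t,j))"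
    by (rule index_mult_mat_sum[OF kron_carrier_mat[OF A B] kron_carrier_mat[OF C D] ij])
  also have "\<dots> = (\<Sum>t<m*n. (\<lambda>a b. A $$ (i div n, a) * B $$ (i mod n, b) * (C $$ (a, j div n) * D $$ (b, j mod n)))
                     (t div n) (t mod n))"
    using ij by (intro sum.cong refl) (simp add: index_kron[OF A B] index_kron[OF C D])
  also have "\<dots> = (\<Sum>a<m. \<Sum>b<n. A $$ (i div n, a) * B $$ (i mod n, b) * (C $$ (a, j div n) * D $$ (b, j mod n)))"
    by (rule sum_lessThan_mult_div_mod[OF n])
  also have "\<dots> = (\<Sum>a<m. A $$ (i div n, a) * C $$ (a, j div n)) * (\<Sum>b<n. B $$ (i mod n, b) * D $$ (b, j mod n))"
    by (simp add: sum_product mult_ac)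
  also have "\<dots> = kron (A * C) (B * D) $$ (i,j)"
    using ij n A B C D
    by (simp add: index_kron[of _ m _ n] index_mult_mat_sum less_mult_imp_div_less del: index_mult_mat)
  finally show "(kron A B * kron C D) $$ (i,j) = kron (A * C) (B * D) $$ (i,j)" .
qed

lemma kron_one: "kron (1\<^sub>m m) (1\<^sub>m n) = 1\<^sub>m (m*n)"
proof (rule eq_matI)
  fix i j assume "i < dim_row (1\<^sub>m (m * n))" "j < dim_col (1\<^sub>m (m * n))"
  then have ij: "i < m*n" "j < m*n" by auto
  then have "n > 0" by (cases n) auto
  then have "i div n < m" "j div n < m" using ij by (auto simp: less_mult_imp_div_less)
  moreover have "(i div n = j div n \<and> i mod n = j mod n) = (i = j)"
    by (metis div_mult_mod_eq)
  ultimately show "kron (1\<^sub>m m) (1\<^sub>m n) $$ (i, j) = 1\<^sub>m (m * n) $$ (i, j)"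
    using ij \<open>n > 0\<close> by (auto simp: index_kron[of _ m _ n])
qed (auto simp: kron_def)

lemma similar_mat_kron_sum:
  assumes A: "A \<in> carrier_mat m m" and B: "B \<in> carrier_mat n n"
    and AD: "similar_mat A D" and BD': "similar_mat B D'"
  shows "similar_mat (kron A (1\<^sub>m n) + kron (1\<^sub>m m) B) (kron D (1\<^sub>m n) + kron (1\<^sub>m m) D')"
proof -
  obtain k P Q where "{A,D,P,Q} \<subseteq> carrier_mat k k" and PQ: "P * Q = 1\<^sub>m k" "Q * P = 1\<^sub>m k"
    and A_eq: "A = P * D * Q"
    using similar_matD[OF AD] by blast
  moreover have "k = m" using calculation(1) A by auto
  ultimately have D: "D \<in> carrier_mat m m" and P: "P \<in> carrier_mat m m" and Q: "Q \<in> carrier_mat m m"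
    and PQ: "P * Q = 1\<^sub>m m" "Q * P = 1\<^sub>m m"
    by auto
  obtain k' P' Q' where "{B,D',P',Q'} \<subseteq> carrier_mat k' k'" and PQ': "P' * Q' = 1\<^sub>m k'" "Q' * P' = 1\<^sub>m k'"
    and B_eq: "B = P' * D' * Q'"
    using similar_matD[OF BD'] by blast
  moreover have "k' = n" using calculation(1) B by auto
  ultimately have D': "D' \<in> carrier_mat n n" and P': "P' \<in> carrier_mat n n" and Q': "Q' \<in> carrier_mat n n"
    and PQ': "P' * Q' = 1\<^sub>m n" "Q' * P' = 1\<^sub>m n"
    by auto
  have PP': "kron P P' \<in> carrier_mat (m*n) (m*n)" and QQ': "kron Q Q' \<in> carrier_mat (m*n) (m*n)"
    using P P' Q Q' by (simp_all add: kron_carrier_mat)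
  have D1: "kron D (1\<^sub>m n) \<in> carrier_mat (m*n) (m*n)" and D1': "kron (1\<^sub>m m) D' \<in> carrier_mat (m*n) (m*n)"
    using D D' by (simp_all add: kron_carrier_mat)
  have "kron A (1\<^sub>m n) = kron (P * D * Q) (P' * 1\<^sub>m n * Q')"
    using P' PQ'(1) by (simp add: A_eq)
  also have "\<dots> = kron P P' * kron D (1\<^sub>m n) * kron Q Q'"
    using P D Q P' Q' by (simp add: kron_mult[of "P * D" m Q] kron_mult[of P m D] del: assoc_mult_mat)
  finally have A_kron: "kron A (1\<^sub>m n) = kron P P' * kron D (1\<^sub>m n) * kron Q Q'" .
  have "kron (1\<^sub>m m) B = kron (P * 1\<^sub>m m * Q) (P' * D' * Q')"
    using P PQ(1) by (simp add: B_eq)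
  also have "\<dots> = kron P P' * kron (1\<^sub>m m) D' * kron Q Q'"
    using P D' Q P' Q' by (simp add: kron_mult[of P m Q "P' * D'" n Q'] kron_mult[of P m "1\<^sub>m m" P' n D'] del: assoc_mult_mat)
  finally have B_kron: "kron (1\<^sub>m m) B = kron P P' * kron (1\<^sub>m m) D' * kron Q Q'" .
  have "kron A (1\<^sub>m n) + kron (1\<^sub>m m) B
      = kron P P' * (kron D (1\<^sub>m n) + kron (1\<^sub>m m) D') * kron Q Q'"
    unfolding A_kron B_kron
    by (simp add: mult_add_distrib_mat[OF PP' D1 D1'] add_mult_distrib_mat[OF mult_carrier_mat[OF PP' D1] mult_carrier_mat[OF PP' D1'] QQ'])
  moreover have "kron P P' * kron Q Q' = 1\<^sub>m (m*n)" "kron Q Q' * kron P P' = 1\<^sub>m (m*n)"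
    using P P' Q Q' PQ PQ' by (simp_all add: kron_mult kron_one)
  ultimately show ?thesis
    using A B PP' QQ' D1 D1' by (intro similar_matI[where n = "m*n"]) (auto simp: kron_carrier_mat)
qed

section \<open>Diagonalising \<open>\<Delta>\<close> by Bloch waves\<close>

definition bloch_angle :: "nat \<Rightarrow> real \<Rightarrow> nat \<Rightarrow> real" where
  "bloch_angle r \<theta> k = (\<theta> + 2*pi*real k) / real r"

lemma cis_mult_bloch_angle: "r > 0 \<Longrightarrow> cis (real r * bloch_angle r \<theta> k) = cis \<theta>"
proof -
  assume "r > 0"
  then have "cis (real r * bloch_angle r \<theta> k) = cis \<theta> * cis (2*pi*real k)"
    by (simp add: bloch_angle_def flip: cis_mult)
  also have "cis (2*pi*real k) = 1" by (rule cis_multiple_2pi) simp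
  finally show ?thesis by simp
qed

lemma Delta_carrier_mat: "r \<ge> 2 \<Longrightarrow> Delta r \<theta> \<in> carrier_mat r r"
  by (auto simp: Delta_def)

lemma Delta_row_sum:
  assumes r: "r \<ge> 3" and m: "m < r"
  shows "(\<Sum>t<r. Delta r \<theta> $$ (m,t) * x t) =
     (if m+1 < r then x (m+1) else cis \<theta> * x 0) + (if m > 0 then x (m-1) else cis (-\<theta>) * x (r-1))"
proof -
  define a where "a = (if m+1<r then m+1 else 0)"
  define b where "b = (if m>0 then m-1 else r-1)"
  define ca where "ca = (if m+1<r then 1 else cis \<theta>)"
  define cb where "cb = (if m>0 then 1 else cis (-\<theta>))"
  have ab: "a < r" "b < r" "a \<noteq> b" using r m by (auto simp: a_def b_def)
  have "Delta r \<theta> $$ (m,t) = (if t = a then ca else 0) + (if t = b then cb else 0)" if "t < r" for t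
    using r m that unfolding Delta_def a_def b_def ca_def cb_def by auto
  then have "(\<Sum>t<r. Delta r \<theta> $$ (m,t) * x t)
      = (\<Sum>t<r. (if t = a then ca * x t else 0) + (if t = b then cb * x t else 0))"
    by (intro sum.cong refl) (simp add: distrib_right)
  also have "\<dots> = ca * x a + cb * x b"
    using ab by (simp add: sum.distrib)
  finally show ?thesis by (simp add: a_def b_def ca_def cb_def)
qed

lemma Delta_bloch_eigenvector:
  assumes r: "r \<ge> 2" and m: "m < r" and \<alpha>: "cis (real r * \<alpha>) = cis \<theta>"
  shows "(\<Sum>t<r. Delta r \<theta> $$ (m,t) * cis (real t * \<alpha>)) = complex_of_real (2 * cos \<alpha>) * cis (real m * \<alpha>)"
proof -
  have "(\<Sum>t<r. Delta r \<theta> $$ (m,t) * cis (real t * \<alpha>)) = cis ((real m + 1) * \<alpha>) + cis ((real m - 1) * \<alpha>)"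
  proof (cases "r = 2")
    case True
    have \<theta>: "cis \<theta> = cis (2 * \<alpha>)" "cis (-\<theta>) = cis (- (2 * \<alpha>))"
      using \<alpha> True by (simp_all flip: cis_inverse)
    have "m = 0 \<or> m = 1" using m True by auto
    then show ?thesis
      using True by (auto simp: Delta_def numeral_2_eq_2 \<theta> cis_mult algebra_simps)
  next
    case False
    then have r3: "r \<ge> 3" using r by simp
    have "(if m+1 < r then cis (real (m+1) * \<alpha>) else cis \<theta> * cis (real 0 * \<alpha>)) = cis ((real m + 1) * \<alpha>)"
    proof (cases "m+1 < r")
      case False
      then have "real r = real m + 1" using m by simp
      then show ?thesis using False \<alpha> by simp
    qed (simp add: add.commute)
    moreover have "(if m > 0 then cis (real (m-1) * \<alpha>) else cis (-\<theta>) * cis (real (r-1) * \<alpha>))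
        = cis ((real m - 1) * \<alpha>)"
    proof (cases "m > 0")
      case False
      have "cis (-\<theta>) * cis (real (r-1) * \<alpha>) = cis (-\<theta>) * (cis (real r * \<alpha>) * cis (- \<alpha>))"
        using r by (simp add: cis_mult of_nat_diff algebra_simps)
      then show ?thesis using False \<alpha> by (simp add: cis_mult)
    qed (simp add: of_nat_diff)
    ultimately show ?thesis by (simp add: Delta_row_sum[OF r3 m])
  qed
  also have "\<dots> = cis (real m * \<alpha>) * (cis \<alpha> + cis (- \<alpha>))"
    by (simp add: cis_mult distrib_left algebra_simps)
  also have "cis \<alpha> + cis (- \<alpha>) = complex_of_real (2 * cos \<alpha>)"
    by (simp add: complex_eq_iff)
  finally show ?thesis by (simp add: mult.commute)
qed

definition fourier_mat :: "nat \<Rightarrow> real \<Rightarrow> complex mat" where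
  "fourier_mat r \<theta> = mat r r (\<lambda>(m,k). cis (real m * bloch_angle r \<theta> k))"

definition fourier_inv_mat :: "nat \<Rightarrow> real \<Rightarrow> complex mat" where
  "fourier_inv_mat r \<theta> = mat r r (\<lambda>(k,m). cis (- (real m * bloch_angle r \<theta> k)) / of_nat r)"

definition bloch_diag_mat :: "nat \<Rightarrow> real \<Rightarrow> complex mat" where
  "bloch_diag_mat r \<theta> = mat r r (\<lambda>(i,j). if i = j then complex_of_real (2 * cos (bloch_angle r \<theta> i)) else 0)"

lemma fourier_mat_carrier: "fourier_mat r \<theta> \<in> carrier_mat r r"
  and fourier_inv_mat_carrier: "fourier_inv_mat r \<theta> \<in> carrier_mat r r"
  and bloch_diag_mat_carrier: "bloch_diag_mat r \<theta> \<in> carrier_mat r r"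
  by (auto simp: fourier_mat_def fourier_inv_mat_def bloch_diag_mat_def)

lemma Delta_mult_fourier_mat:
  assumes r: "r \<ge> 2"
  shows "Delta r \<theta> * fourier_mat r \<theta> = fourier_mat r \<theta> * bloch_diag_mat r \<theta>"
proof (rule eq_matI)
  fix m k assume "m < dim_row (fourier_mat r \<theta> * bloch_diag_mat r \<theta>)"
    "k < dim_col (fourier_mat r \<theta> * bloch_diag_mat r \<theta>)"
  then have mk: "m < r" "k < r" by (auto simp: fourier_mat_def bloch_diag_mat_def)
  let ?\<alpha> = "bloch_angle r \<theta> k"
  have "(Delta r \<theta> * fourier_mat r \<theta>) $$ (m,k) = (\<Sum>t<r. Delta r \<theta> $$ (m,t) * fourier_mat r \<theta> $$ (t,k))"
    by (rule index_mult_mat_sum[OF Delta_carrier_mat[OF r] fourier_mat_carrier mk])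
  also have "\<dots> = (\<Sum>t<r. Delta r \<theta> $$ (m,t) * cis (real t * ?\<alpha>))"
    using mk by (intro sum.cong refl) (simp add: fourier_mat_def)
  also have "\<dots> = complex_of_real (2 * cos ?\<alpha>) * cis (real m * ?\<alpha>)"
    using r by (intro Delta_bloch_eigenvector mk cis_mult_bloch_angle) auto
  also have "\<dots> = (\<Sum>t<r. fourier_mat r \<theta> $$ (m,t) * bloch_diag_mat r \<theta> $$ (t,k))"
    using mk by (simp add: fourier_mat_def bloch_diag_mat_def if_distrib cong: if_cong)
  also have "\<dots> = (fourier_mat r \<theta> * bloch_diag_mat r \<theta>) $$ (m,k)"
    using mk by (simp add: index_mult_mat_sum[OF fourier_mat_carrier bloch_diag_mat_carrier] del: index_mult_mat)
  finally show "(Delta r \<theta> * fourier_mat r \<theta>) $$ (m,k) = (fourier_mat r \<theta> * bloch_diag_mat r \<theta>) $$ (m,k)" .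
qed (use Delta_carrier_mat[OF r] in \<open>auto simp: fourier_mat_def bloch_diag_mat_def\<close>)

lemma cis_root_of_unity_ne_1:
  assumes "k < r" "k' < r" "k \<noteq> k'"
  shows "cis (2*pi*(real k' - real k)/real r) \<noteq> 1"
proof
  assume "cis (2*pi*(real k' - real k)/real r) = 1"
  then have "cos (2*pi*(real k' - real k)/real r) = 1" by (simp add: complex_eq_iff)
  then obtain n :: int where "2*pi*(real k' - real k)/real r = n * 2 * pi"
    by (auto simp: cos_one_2pi_int)
  then have "(real k' - real k) * (2*pi) = (n * real r) * (2*pi)" using assms by (simp add: field_simps)
  then have "real k' - real k = n * real r" by simp
  then have "real_of_int (int k' - int k) = real_of_int (n * int r)" by simp
  then have e: "int k' - int k = n * int r" by (simp only: of_int_eq_iff)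
  show False
  proof (cases "n = 0")
    case False
    then have "\<bar>n\<bar> * int r \<ge> 1 * int r" by (intro mult_right_mono) auto
    then have "\<bar>n * int r\<bar> \<ge> int r" by (simp add: abs_mult)
    then show False using e assms by linarith
  qed (use e assms in simp)
qed

lemma fourier_inv_mat_mult:
  assumes r: "r > 0"
  shows "fourier_inv_mat r \<theta> * fourier_mat r \<theta> = 1\<^sub>m r"
proof (rule eq_matI)
  fix k k' assume "k < dim_row (1\<^sub>m r)" "k' < dim_col (1\<^sub>m r)"
  then have kk: "k < r" "k' < r" by auto
  define z where "z = cis (2*pi*(real k' - real k)/real r)"
  have "fourier_inv_mat r \<theta> $$ (k,t) * fourier_mat r \<theta> $$ (t,k') = z ^ t / of_nat r" if "t < r" for t
  proof -
    have "fourier_inv_mat r \<theta> $$ (k,t) * fourier_mat r \<theta> $$ (t,k')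
        = cis (real t * (bloch_angle r \<theta> k' - bloch_angle r \<theta> k)) / of_nat r"
      using that kk by (simp add: fourier_inv_mat_def fourier_mat_def cis_mult algebra_simps)
    also have "real t * (bloch_angle r \<theta> k' - bloch_angle r \<theta> k) = real t * (2*pi*(real k' - real k)/real r)"
      using r by (simp add: bloch_angle_def field_simps)
    finally show ?thesis by (simp only: z_def Complex.DeMoivre)
  qed
  then have "(fourier_inv_mat r \<theta> * fourier_mat r \<theta>) $$ (k,k') = (\<Sum>t<r. z ^ t) / of_nat r"
    using kk by (simp add: index_mult_mat_sum[OF fourier_inv_mat_carrier fourier_mat_carrier]
        sum_divide_distrib del: index_mult_mat)
  also have "\<dots> = 1\<^sub>m r $$ (k,k')"
  proof (cases "k = k'")
    case False
    have "z ^ r = cis (2 * pi * (real_of_int (int k' - int k)))" using r by (simp add: z_def Complex.DeMoivre)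
    also have "\<dots> = 1" by (rule cis_multiple_2pi) simp
    finally have "(\<Sum>t<r. z ^ t) = 0"
      using cis_root_of_unity_ne_1[OF kk False] by (simp add: sum_gp_strict z_def)
    then show ?thesis using False kk by simp
  qed (use kk r in \<open>simp add: z_def\<close>)
  finally show "(fourier_inv_mat r \<theta> * fourier_mat r \<theta>) $$ (k,k') = 1\<^sub>m r $$ (k,k')" .
qed (auto simp: fourier_mat_def fourier_inv_mat_def)

lemma Delta_similar_bloch_diag_mat:
  assumes r: "r \<ge> 2"
  shows "similar_mat (Delta r \<theta>) (bloch_diag_mat r \<theta>)"
proof -
  let ?F = "fourier_mat r \<theta>" and ?Q = "fourier_inv_mat r \<theta>"
  have QF: "?Q * ?F = 1\<^sub>m r" using r by (simp add: fourier_inv_mat_mult)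
  have FQ: "?F * ?Q = 1\<^sub>m r"
    by (rule mat_mult_left_right_inverse[OF fourier_inv_mat_carrier fourier_mat_carrier QF])
  have "Delta r \<theta> = Delta r \<theta> * (?F * ?Q)"
    using Delta_carrier_mat[OF r, of \<theta>] by (simp add: FQ)
  also have "\<dots> = Delta r \<theta> * ?F * ?Q"
    by (rule assoc_mult_mat[OF Delta_carrier_mat[OF r] fourier_mat_carrier fourier_inv_mat_carrier, symmetric])
  also have "\<dots> = ?F * bloch_diag_mat r \<theta> * ?Q"
    by (simp add: Delta_mult_fourier_mat[OF r])
  finally have "Delta r \<theta> = ?F * bloch_diag_mat r \<theta> * ?Q" .
  from similar_matI[OF _ FQ QF this] show ?thesis
    by (simp add: Delta_carrier_mat[OF r] fourier_mat_carrier fourier_inv_mat_carrier bloch_diag_mat_carrier)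
qed

lemma proots_prod_linear_factors: "proots (\<Prod>a\<leftarrow>xs. [:- a, 1:]) = mset (xs :: 'a::idom list)"
proof (induction xs)
  case (Cons a xs)
  have "(\<Prod>a\<leftarrow>xs. [:- a, 1:]) \<noteq> 0" by (auto simp: prod_list_zero_iff)
  then have "proots ([:- a, 1:] * (\<Prod>a\<leftarrow>xs. [:- a, 1:])) = proots [:- a, 1:] + proots (\<Prod>a\<leftarrow>xs. [:- a, 1:])"
    by (intro proots_mult) auto
  then show ?case using Cons proots_linear_factor[of "-a"] by simp
qed simp

lemma proots_char_poly_diagonal:
  assumes A: "A \<in> carrier_mat n n" and diag: "\<And>i j. i < n \<Longrightarrow> j < n \<Longrightarrow> A $$ (i,j) = (if i = j then d i else 0)"
  shows "proots (char_poly A) = mset (map d [0..<n])"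
proof -
  have "upper_triangular A" using A diag by (auto simp: upper_triangular_def)
  then have "proots (char_poly A) = mset (diag_mat A)"
    by (simp only: char_poly_upper_triangular[OF A] proots_prod_linear_factors)
  also have "diag_mat A = map d [0..<n]"
    using A diag by (auto simp: diag_mat_def intro: nth_equalityI)
  finally show ?thesis .
qed

definition bloch_eigenvalue :: "nat \<Rightarrow> real \<Rightarrow> real \<Rightarrow> nat \<Rightarrow> real" where
  "bloch_eigenvalue r \<theta> \<phi> i = 2 * cos (bloch_angle r \<theta> (i div r)) + 2 * cos (bloch_angle r \<phi> (i mod r))"

lemma index_kron_sum_bloch_diag_mat:
  assumes ij: "i < r*r" "j < r*r"
  shows "(kron (bloch_diag_mat r \<theta>) (1\<^sub>m r) + kron (1\<^sub>m r) (bloch_diag_mat r \<phi>)) $$ (i,j)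
    = (if i = j then complex_of_real (bloch_eigenvalue r \<theta> \<phi> i) else 0)"
proof -
  have "r > 0" using ij by (cases r) auto
  then have d: "i div r < r" "j div r < r" "i mod r < r" "j mod r < r"
    using ij by (auto simp: less_mult_imp_div_less)
  have "(i div r = j div r \<and> i mod r = j mod r) = (i = j)" by (metis div_mult_mod_eq)
  moreover have "(kron (bloch_diag_mat r \<theta>) (1\<^sub>m r) + kron (1\<^sub>m r) (bloch_diag_mat r \<phi>)) $$ (i,j)
      = bloch_diag_mat r \<theta> $$ (i div r, j div r) * 1\<^sub>m r $$ (i mod r, j mod r)
        + 1\<^sub>m r $$ (i div r, j div r) * bloch_diag_mat r \<phi> $$ (i mod r, j mod r)"
    using ij kron_carrier_mat[OF one_carrier_mat bloch_diag_mat_carrier, of r r \<phi>]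
    by (simp add: index_kron[OF bloch_diag_mat_carrier one_carrier_mat]
        index_kron[OF one_carrier_mat bloch_diag_mat_carrier])
  ultimately show ?thesis
    using d by (auto simp: bloch_diag_mat_def bloch_eigenvalue_def)
qed

lemma proots_char_poly_DeltaGamma:
  assumes r: "r \<ge> 2"
  shows "proots (char_poly (DeltaGamma r \<theta> \<phi>))
    = mset (map (\<lambda>i. complex_of_real (bloch_eigenvalue r \<theta> \<phi> i)) [0..<r*r])"
proof -
  have sim: "similar_mat (DeltaGamma r \<theta> \<phi>) (kron (bloch_diag_mat r \<theta>) (1\<^sub>m r) + kron (1\<^sub>m r) (bloch_diag_mat r \<phi>))"
    unfolding DeltaGamma_def
    by (intro similar_mat_kron_sum Delta_carrier_mat Delta_similar_bloch_diag_mat r)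
  show ?thesis
    unfolding char_poly_similar[OF sim]
    by (intro proots_char_poly_diagonal index_kron_sum_bloch_diag_mat)
      (simp add: kron_carrier_mat bloch_diag_mat_carrier)
qed

definition nth_smallest :: "(nat \<Rightarrow> real) \<Rightarrow> nat \<Rightarrow> nat \<Rightarrow> real" where
  "nth_smallest f N j = sorted_list_of_multiset (mset (map f [0..<N])) ! (j - 1)"

lemma lam_DeltaGamma: "r \<ge> 2 \<Longrightarrow> lam j (DeltaGamma r \<theta> \<phi>) = nth_smallest (bloch_eigenvalue r \<theta> \<phi>) (r*r) j"
  by (simp add: lam_def eigs_sorted_def nth_smallest_def proots_char_poly_DeltaGamma multiset.map_comp o_def)

section \<open>Ordered eigenvalues and bands\<close>

lemma le_card_iff_nth_smallest:
  assumes j: "1 \<le> j" "j \<le> N" and down: "\<And>a b. b \<le> a \<Longrightarrow> P a \<Longrightarrow> P b"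
  shows "j \<le> card {i. i < N \<and> P (f i)} \<longleftrightarrow> P (nth_smallest f N j)"
proof -
  define xs where "xs = sorted_list_of_multiset (mset (map f [0..<N]))"
  have s: "sorted xs" and m: "mset xs = mset (map f [0..<N])" unfolding xs_def by simp_all
  have len: "length xs = N" using arg_cong[OF m, of size] by simp
  have "card {i. i < N \<and> P (f i)} = length (filter P (map f [0..<N]))"
    by (simp add: length_filter_conv_card, rule arg_cong[where f=card], auto)
  also have "\<dots> = length (filter P xs)"
    by (metis m mset_filter size_mset)
  also have "\<dots> = card {i. i < N \<and> P (xs ! i)}"
    by (simp add: length_filter_conv_card len)
  finally have c: "card {i. i < N \<and> P (f i)} = card {i. i < N \<and> P (xs ! i)}" .
  show ?thesis
  proof
    assume "j \<le> card {i. i < N \<and> P (f i)}"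
    then have jc: "j \<le> card {i. i < N \<and> P (xs ! i)}" using c by simp
    show "P (nth_smallest f N j)"
    proof (rule ccontr)
      assume np: "\<not> P (nth_smallest f N j)"
      have "{i. i < N \<and> P (xs ! i)} \<subseteq> {..<j-1}"
      proof
        fix i assume i: "i \<in> {i. i < N \<and> P (xs ! i)}"
        show "i \<in> {..<j-1}"
        proof (rule ccontr)
          assume "i \<notin> {..<j-1}"
          then have "xs ! (j-1) \<le> xs ! i" using s i len by (intro sorted_nth_mono) auto
          then show False using down i np by (auto simp: nth_smallest_def xs_def)
        qed
      qed
      then have "card {i. i < N \<and> P (xs ! i)} \<le> j - 1" by (metis card_lessThan card_mono finite_lessThan)
      then show False using jc j by simp
    qed
  next
    assume p: "P (nth_smallest f N j)"
    have "{..<j} \<subseteq> {i. i < N \<and> P (xs ! i)}"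
    proof
      fix i assume "i \<in> {..<j}"
      then have i: "i \<le> j - 1" "i < N" using j by auto
      then have "xs ! i \<le> xs ! (j-1)" using s len j by (intro sorted_nth_mono) auto
      then show "i \<in> {i. i < N \<and> P (xs ! i)}" using down p i by (auto simp: nth_smallest_def xs_def)
    qed
    then have "j \<le> card {i. i < N \<and> P (xs ! i)}"
      by (metis card_lessThan card_mono finite_Collect_conjI finite_lessThan lessThan_def)
    then show "j \<le> card {i. i < N \<and> P (f i)}" using c by simp
  qed
qed

lemma nth_smallest_less_iff:
  "1 \<le> j \<Longrightarrow> j \<le> N \<Longrightarrow> nth_smallest f N j < y \<longleftrightarrow> j \<le> card {i. i < N \<and> f i < y}"
  by (rule le_card_iff_nth_smallest[symmetric]) auto

lemma nth_smallest_le_iff: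
  "1 \<le> j \<Longrightarrow> j \<le> N \<Longrightarrow> nth_smallest f N j \<le> y \<longleftrightarrow> j \<le> card {i. i < N \<and> f i \<le> y}"
  by (rule le_card_iff_nth_smallest[symmetric]) auto

lemma continuous_on_nth_smallest:
  assumes j: "1 \<le> j" "j \<le> N" and f: "\<And>i. i < N \<Longrightarrow> continuous_on S (\<lambda>s. f s i)"
  shows "continuous_on S (\<lambda>s. nth_smallest (f s) N j)"
  unfolding continuous_on_def
proof (intro ballI order_tendstoI)
  fix x a assume x: "x \<in> S"
  have lim: "((\<lambda>s. f s i) \<longlongrightarrow> f x i) (at x within S)" if "i < N" for i
    using f[OF that] x by (simp add: continuous_on_def)
  show "eventually (\<lambda>s. nth_smallest (f s) N j < a) (at x within S)" if "nth_smallest (f x) N j < a"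
  proof -
    define A where "A = {i. i < N \<and> f x i < a}"
    have "eventually (\<lambda>s. \<forall>i\<in>A. f s i < a) (at x within S)"
      by (intro eventually_ball_finite) (auto simp: A_def intro!: order_tendstoD(2)[OF lim])
    then show ?thesis
    proof (rule eventually_mono)
      fix s assume "\<forall>i\<in>A. f s i < a"
      then have "card A \<le> card {i. i < N \<and> f s i < a}" by (intro card_mono) (auto simp: A_def)
      moreover have "j \<le> card A" using that nth_smallest_less_iff[OF j] by (simp add: A_def)
      ultimately show "nth_smallest (f s) N j < a" by (simp add: nth_smallest_less_iff[OF j])
    qed
  qed
  show "eventually (\<lambda>s. a < nth_smallest (f s) N j) (at x within S)" if "a < nth_smallest (f x) N j"
  proof -
    define A where "A = {i. i < N \<and> a < f x i}"
    have "eventually (\<lambda>s. \<forall>i\<in>A. a < f s i) (at x within S)"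
      by (intro eventually_ball_finite) (auto simp: A_def intro!: order_tendstoD(1)[OF lim])
    then show ?thesis
    proof (rule eventually_mono)
      fix s assume "\<forall>i\<in>A. a < f s i"
      then have "{i. i < N \<and> f s i \<le> a} \<subseteq> {i. i < N \<and> f x i \<le> a}"
        by (auto simp: A_def not_le[symmetric])
      then have "card {i. i < N \<and> f s i \<le> a} \<le> card {i. i < N \<and> f x i \<le> a}"
        by (intro card_mono) auto
      moreover have "\<not> j \<le> card {i. i < N \<and> f x i \<le> a}"
        using that nth_smallest_le_iff[OF j, of "f x" a] by simp
      ultimately show "a < nth_smallest (f s) N j" using nth_smallest_le_iff[OF j, of "f s" a] by linarith
    qed
  qed
qed

lemma continuous_on_bloch_eigenvalue:
  "r > 0 \<Longrightarrow> continuous_on S (\<lambda>s. bloch_eigenvalue r (a + s*b) (c + s*d) i)"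
  unfolding bloch_eigenvalue_def bloch_angle_def by (intro continuous_intros) auto

lemma interior_band_if_nth_smallest_between:
  assumes r: "r \<ge> 2" and j: "1 \<le> j" "j \<le> r*r"
    and p: "\<theta>p \<in> {0..pi}" "\<phi>p \<in> {0..pi}" and q: "\<theta>q \<in> {0..pi}" "\<phi>q \<in> {0..pi}"
    and less: "nth_smallest (bloch_eigenvalue r \<theta>q \<phi>q) (r*r) j < E"
    and greater: "E < nth_smallest (bloch_eigenvalue r \<theta>p \<phi>p) (r*r) j"
  shows "E \<in> interior (band r j)"
proof -
  define g where "g s = nth_smallest (bloch_eigenvalue r (\<theta>q + s*(\<theta>p-\<theta>q)) (\<phi>q + s*(\<phi>p-\<phi>q))) (r*r) j" for s
  have g: "continuous_on {0..1} g"
    unfolding g_def using r by (intro continuous_on_nth_smallest[OF j] continuous_on_bloch_eigenvalue) auto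
  have segment: "a + s*(b - a) \<in> {0..pi}" if "a \<in> {0..pi}" "b \<in> {0..pi}" "s \<in> {0..1}" for a b s :: real
  proof -
    have "a + s*(b - a) = (1-s)*a + s*b" by (simp add: algebra_simps)
    moreover have "(1-s)*a + s*b \<le> (1-s)*pi + s*pi"
      using that by (intro add_mono mult_left_mono) auto
    moreover have "0 \<le> (1-s)*a + s*b" using that by simp
    ultimately show ?thesis by (simp add: algebra_simps)
  qed
  have "{g 0 <..< g 1} \<subseteq> band r j"
  proof
    fix y assume "y \<in> {g 0 <..< g 1}"
    then obtain s where s: "s \<in> {0..1}" "g s = y"
      using IVT'[of g 0 y 1, OF _ _ _ g] by auto
    then show "y \<in> band r j"
      unfolding band_def using segment[OF q(1) p(1) s(1)] segment[OF q(2) p(2) s(1)]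
      by (auto simp: lam_DeltaGamma[OF r] g_def)
  qed
  then show ?thesis
    by (rule interiorI[rotated 2]) (use less greater in \<open>auto simp: g_def\<close>)
qed

lemma interior_band_if_card_less:
  assumes r: "r \<ge> 2"
    and p: "\<theta>p \<in> {0..pi}" "\<phi>p \<in> {0..pi}" and q: "\<theta>q \<in> {0..pi}" "\<phi>q \<in> {0..pi}"
    and card_less: "card {i. i < r*r \<and> bloch_eigenvalue r \<theta>p \<phi>p i \<le> E}
                    < card {i. i < r*r \<and> bloch_eigenvalue r \<theta>q \<phi>q i < E}"
  shows "\<exists>j \<in> {1..r^2}. E \<in> interior (band r j)"
proof -
  define j where "j = card {i. i < r*r \<and> bloch_eigenvalue r \<theta>q \<phi>q i < E}"
  have "1 \<le> j" using card_less unfolding j_def by linarith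
  moreover have "j \<le> card {..<r*r}" unfolding j_def by (intro card_mono) auto
  ultimately have j: "1 \<le> j" "j \<le> r*r" by simp_all
  have "nth_smallest (bloch_eigenvalue r \<theta>q \<phi>q) (r*r) j < E"
    using nth_smallest_less_iff[OF j] j_def by simp
  moreover have "E < nth_smallest (bloch_eigenvalue r \<theta>p \<phi>p) (r*r) j"
    using nth_smallest_le_iff[OF j] card_less j_def by (simp add: not_le[symmetric])
  ultimately have "E \<in> interior (band r j)"
    by (rule interior_band_if_nth_smallest_between[OF r j p q])
  then show ?thesis using j by (auto simp: power2_eq_square)
qed

section \<open>Second-order expansions at \<open>0\<^sup>+\<close>\<close>

definition has_second_order_expansion :: "(real \<Rightarrow> real) \<Rightarrow> real \<Rightarrow> real \<Rightarrow> real \<Rightarrow> bool" where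
  "has_second_order_expansion g a0 a1 a2 \<longleftrightarrow>
     ((\<lambda>u. (g u - (a0 + a1*u + a2*u^2)) / u^2) \<longlongrightarrow> 0) (at_right 0)"

lemma has_second_order_expansion_add:
  assumes "has_second_order_expansion g a0 a1 a2" "has_second_order_expansion h b0 b1 b2"
  shows "has_second_order_expansion (\<lambda>u. g u + h u) (a0 + b0) (a1 + b1) (a2 + b2)"
proof -
  have "(\<lambda>u. (g u + h u - ((a0 + b0) + (a1 + b1)*u + (a2 + b2)*u^2)) / u^2)
      = (\<lambda>u. (g u - (a0 + a1*u + a2*u^2)) / u^2 + (h u - (b0 + b1*u + b2*u^2)) / u^2)"
    by (rule ext) (simp add: add_divide_distrib[symmetric] algebra_simps)
  then show ?thesis
    using tendsto_add[OF assms[unfolded has_second_order_expansion_def]]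
    by (simp add: has_second_order_expansion_def)
qed

lemma has_second_order_expansion_cmult:
  assumes "has_second_order_expansion g a0 a1 a2"
  shows "has_second_order_expansion (\<lambda>u. c * g u) (c * a0) (c * a1) (c * a2)"
  using tendsto_mult_right_zero[OF assms[unfolded has_second_order_expansion_def], of c]
  by (simp add: has_second_order_expansion_def algebra_simps)

lemma has_second_order_expansion_const: "has_second_order_expansion (\<lambda>u. c) c 0 0"
  by (simp add: has_second_order_expansion_def)

lemma has_second_order_expansion_eventually_pos:
  assumes g: "has_second_order_expansion g a0 a1 a2"
    and lead: "a0 > 0 \<or> a0 = 0 \<and> (a1 > 0 \<or> a1 = 0 \<and> a2 > 0)"
  shows "eventually (\<lambda>u. g u > 0) (at_right 0)"
proof -
  define R where "R u = (g u - (a0 + a1*u + a2*u^2)) / u^2" for u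
  have R: "(R \<longlongrightarrow> 0) (at_right 0)" using g unfolding has_second_order_expansion_def R_def[abs_def] .
  have u: "((\<lambda>u. u) \<longlongrightarrow> 0) (at_right (0::real))" by (rule tendsto_ident_at)
  have g_eq: "g u = a0 + a1*u + a2*u^2 + u^2 * R u" if "u > 0" for u
    using that by (simp add: R_def)
  have pos: "eventually (\<lambda>u. u > 0) (at_right (0::real))" by (rule eventually_at_right_less)
  consider "a0 > 0" | "a0 = 0" "a1 > 0" | "a0 = 0" "a1 = 0" "a2 > 0" using lead by blast
  then show ?thesis
  proof cases
    case 1
    have "((\<lambda>u. a0 + a1*u + a2*u^2 + u^2 * R u) \<longlongrightarrow> a0 + a1*0 + a2*0^2 + 0^2 * 0) (at_right 0)"
      by (intro tendsto_intros u R)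
    then have "eventually (\<lambda>u. a0 + a1*u + a2*u^2 + u^2 * R u > 0) (at_right 0)"
      using 1 by (intro order_tendstoD(1)) auto
    with pos show ?thesis by eventually_elim (simp add: g_eq)
  next
    case 2
    have "((\<lambda>u. a1 + a2*u + u * R u) \<longlongrightarrow> a1 + a2*0 + 0 * 0) (at_right 0)"
      by (intro tendsto_intros u R)
    then have "eventually (\<lambda>u. a1 + a2*u + u * R u > 0) (at_right 0)"
      using 2 by (intro order_tendstoD(1)) auto
    with pos show ?thesis
    proof eventually_elim
      case (elim u)
      then have "g u = u * (a1 + a2*u + u * R u)" using 2 by (simp add: g_eq power2_eq_square algebra_simps)
      with elim show ?case by simp
    qed
  next
    case 3
    have "((\<lambda>u. a2 + R u) \<longlongrightarrow> a2 + 0) (at_right 0)"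
      by (intro tendsto_intros R)
    then have "eventually (\<lambda>u. a2 + R u > 0) (at_right 0)"
      using 3 by (intro order_tendstoD(1)) auto
    with pos show ?thesis
    proof eventually_elim
      case (elim u)
      then have "g u = u^2 * (a2 + R u)" using 3 by (simp add: g_eq algebra_simps)
      with elim show ?case by simp
    qed
  qed
qed

lemma has_second_order_expansion_eventually_neg:
  assumes "has_second_order_expansion g a0 a1 a2"
    and "a0 < 0 \<or> a0 = 0 \<and> (a1 < 0 \<or> a1 = 0 \<and> a2 < 0)"
  shows "eventually (\<lambda>u. g u < 0) (at_right 0)"
  using has_second_order_expansion_eventually_pos[OF has_second_order_expansion_cmult[OF assms(1), of "-1"]]
    assms(2) by auto

lemma abs_sin_minus_self_le: "\<bar>sin t - t\<bar> \<le> \<bar>t\<bar>^3" for t :: real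
proof -
  have "\<bar>sin t - (\<Sum>m<3. sin_coeff m * t ^ m)\<bar> \<le> inverse (fact 3) * \<bar>t\<bar> ^ 3"
    by (rule Maclaurin_sin_bound)
  moreover have "(\<Sum>m<3. sin_coeff m * t ^ m) = t"
    by (simp add: sin_coeff_def numeral_3_eq_3 lessThan_Suc)
  moreover have "inverse (fact 3) * \<bar>t\<bar> ^ 3 \<le> \<bar>t\<bar>^3"
    by (simp add: fact_numeral)
  ultimately show ?thesis by linarith
qed

lemma abs_cos_minus_taylor2_le: "\<bar>cos t - 1 + t^2/2\<bar> \<le> t^4" for t :: real
proof -
  define a where "a = t/2"
  have "cos t = 1 - 2 * sin a ^ 2" using cos_double_sin[of a] by (simp add: a_def)
  then have "cos t - 1 + t^2/2 = 2 * (a - sin a) * (a + sin a)"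
    by (simp add: a_def power2_eq_square algebra_simps)
  then have "\<bar>cos t - 1 + t^2/2\<bar> = 2 * \<bar>sin a - a\<bar> * \<bar>a + sin a\<bar>"
    by (simp only: abs_mult abs_minus_commute[of a])
  also have "\<dots> \<le> 2 * \<bar>a\<bar>^3 * (2*\<bar>a\<bar>)"
    using abs_sin_minus_self_le[of a] abs_sin_x_le_abs_x[of a] by (intro mult_mono mult_left_mono) auto
  also have "\<dots> = t^4 / 4"
    by (simp add: a_def power_abs field_simps power4_eq_xxxx power3_eq_cube)
  also have "\<dots> \<le> t^4" by simp
  finally show ?thesis .
qed

lemma tendsto_cos_remainder_over_square:
  fixes q :: "real \<Rightarrow> real"
  assumes q: "(q \<longlongrightarrow> s) (at_right 0)"
  shows "((\<lambda>u. (cos (u * q u) - 1 + (u * q u)^2/2) / u^2) \<longlongrightarrow> 0) (at_right 0)"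
proof (rule Lim_null_comparison)
  show "eventually (\<lambda>u. norm ((cos (u * q u) - 1 + (u * q u)^2/2) / u^2) \<le> u^2 * q u ^ 4) (at_right 0)"
    using eventually_at_right_less
  proof eventually_elim
    case (elim u)
    have "norm ((cos (u * q u) - 1 + (u * q u)^2/2) / u^2) \<le> (u * q u)^4 / u^2"
      using abs_cos_minus_taylor2_le[of "u * q u"] elim by (simp add: abs_div divide_right_mono)
    also have "\<dots> = u^2 * q u ^ 4" using elim by (simp add: field_simps power2_eq_square power4_eq_xxxx)
    finally show ?case .
  qed
  show "((\<lambda>u. u^2 * q u ^ 4) \<longlongrightarrow> 0) (at_right 0)"
    using tendsto_mult[OF tendsto_power[OF tendsto_ident_at, of 2] tendsto_power[OF q, of 4]] by simp
qed

lemma tendsto_sin_remainder_over_square: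
  fixes q :: "real \<Rightarrow> real"
  assumes q: "(q \<longlongrightarrow> s) (at_right 0)"
  shows "((\<lambda>u. (sin (u * q u) - u * q u) / u^2) \<longlongrightarrow> 0) (at_right 0)"
proof (rule Lim_null_comparison)
  show "eventually (\<lambda>u. norm ((sin (u * q u) - u * q u) / u^2) \<le> u * \<bar>q u\<bar> ^ 3) (at_right 0)"
    using eventually_at_right_less
  proof eventually_elim
    case (elim u)
    have "norm ((sin (u * q u) - u * q u) / u^2) \<le> \<bar>u * q u\<bar>^3 / u^2"
      using abs_sin_minus_self_le[of "u * q u"] elim by (simp add: abs_div divide_right_mono)
    also have "\<dots> = u * \<bar>q u\<bar> ^ 3" using elim by (simp add: abs_mult field_simps power2_eq_square power3_eq_cube)
    finally show ?case .
  qed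
  show "((\<lambda>u. u * \<bar>q u\<bar> ^ 3) \<longlongrightarrow> 0) (at_right 0)"
    using tendsto_mult[OF tendsto_ident_at tendsto_power[OF tendsto_rabs[OF q], of 3]] by simp
qed

lemma has_second_order_expansion_cos:
  "has_second_order_expansion (\<lambda>u. cos (x + (s*u + k*u^2)))
     (cos x) (- s * sin x) (- (k * sin x + s^2 * cos x / 2))"
proof -
  define q where "q u = s + k*u" for u
  have q: "(q \<longlongrightarrow> s) (at_right 0)" unfolding q_def by (auto intro!: tendsto_eq_intros)
  have w: "s*u + k*u^2 = u * q u" for u by (simp add: q_def power2_eq_square algebra_simps)
  have sq_rem: "((\<lambda>u. (s^2*u^2 - (u * q u)^2) / u^2) \<longlongrightarrow> 0) (at_right 0)"
  proof -
    have "((\<lambda>u. s^2 - q u ^ 2) \<longlongrightarrow> s^2 - s^2) (at_right 0)" by (intro tendsto_intros q)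
    moreover have "eventually (\<lambda>u. s^2 - q u ^ 2 = (s^2*u^2 - (u * q u)^2) / u^2) (at_right 0)"
      using eventually_at_right_less by eventually_elim (simp add: field_simps power2_eq_square)
    ultimately show ?thesis by (simp add: tendsto_cong)
  qed
  have "cos (x + u * q u) - (cos x + - s * sin x * u + - (k * sin x + s^2 * cos x / 2) * u^2)
      = cos x * (cos (u * q u) - 1 + (u * q u)^2/2) + cos x / 2 * (s^2*u^2 - (u * q u)^2)
        - sin x * (sin (u * q u) - u * q u)" for u
    by (simp add: cos_add w[symmetric] algebra_simps)
  moreover have "(a*p + b*q - c*t) / d = a*(p/d) + b*(q/d) - c*(t/d)" for a p b q c t d :: real
    by (simp add: add_divide_distrib diff_divide_distrib)
  ultimately have "(cos (x + u * q u) - (cos x + - s * sin x * u + - (k * sin x + s^2 * cos x / 2) * u^2)) / u^2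
      = cos x * ((cos (u * q u) - 1 + (u * q u)^2/2) / u^2) + cos x / 2 * ((s^2*u^2 - (u * q u)^2) / u^2)
        - sin x * ((sin (u * q u) - u * q u) / u^2)" for u
    by (simp only:)
  moreover have "((\<lambda>u. cos x * ((cos (u * q u) - 1 + (u * q u)^2/2) / u^2) + cos x / 2 * ((s^2*u^2 - (u * q u)^2) / u^2)
             - sin x * ((sin (u * q u) - u * q u) / u^2)) \<longlongrightarrow> cos x * 0 + cos x / 2 * 0 - sin x * 0) (at_right 0)"
    by (intro tendsto_intros tendsto_cos_remainder_over_square[OF q] tendsto_sin_remainder_over_square[OF q] sq_rem)
  ultimately show ?thesis
    unfolding has_second_order_expansion_def w by simp
qed

section \<open>Moving a critical eigenvalue across \<open>E\<close>\<close>

lemma critical_curvature_pos: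
  fixes x y \<alpha> \<beta> :: real
  assumes \<alpha>: "\<alpha> \<noteq> 0" and crit: "\<alpha> * sin x + \<beta> * sin y = 0"
    and nondeg: "\<not> (sin x = 0 \<and> sin y = 0)" and c: "cos x + cos y \<noteq> 0"
  shows "(cos x + cos y) * (\<alpha>^2 * cos x + \<beta>^2 * cos y) > 0"
proof -
  have sy: "sin y \<noteq> 0" using crit nondeg \<alpha> by auto
  have sy2: "sin y ^ 2 > 0" using sy by simp
  then have "cos y ^ 2 < 1" using sin_cos_squared_add[of y] by linarith
  then have "\<bar>cos y\<bar> < 1" by (simp add: abs_square_less_1)
  then have "\<bar>cos x\<bar> * \<bar>cos y\<bar> < 1"
    using mult_right_mono[OF abs_cos_le_one[of x], of "\<bar>cos y\<bar>"] by simp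
  then have "\<bar>cos x * cos y\<bar> < 1" by (simp add: abs_mult)
  then have pos: "1 - cos x * cos y > 0" by linarith
  have "(\<beta> * sin y)^2 = (\<alpha> * sin x)^2" using crit by (simp add: eq_neg_iff_add_eq_0[symmetric])
  then have "(\<alpha>^2 * cos x + \<beta>^2 * cos y) * sin y ^ 2 = \<alpha>^2 * (cos x * sin y^2 + sin x^2 * cos y)"
    by (simp add: power_mult_distrib algebra_simps)
  also have "\<dots> = \<alpha>^2 * ((cos x + cos y) * (1 - cos x * cos y))"
    unfolding sin_squared_eq by (simp add: power2_eq_square algebra_simps)
  finally have key: "(\<alpha>^2 * cos x + \<beta>^2 * cos y) * sin y ^ 2 = \<alpha>^2 * ((cos x + cos y) * (1 - cos x * cos y))" .
  have "(cos x + cos y) * (\<alpha>^2 * cos x + \<beta>^2 * cos y) * sin y ^ 2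
      = (cos x + cos y) * ((\<alpha>^2 * cos x + \<beta>^2 * cos y) * sin y ^ 2)"
    by (simp only: mult.assoc)
  also have "\<dots> = \<alpha>^2 * (cos x + cos y)^2 * (1 - cos x * cos y)"
    unfolding key by (simp add: power2_eq_square mult_ac)
  finally have "(cos x + cos y) * (\<alpha>^2 * cos x + \<beta>^2 * cos y) * sin y ^ 2
      = \<alpha>^2 * (cos x + cos y)^2 * (1 - cos x * cos y)" .
  moreover have "\<alpha>^2 * (cos x + cos y)^2 * (1 - cos x * cos y) > 0" using \<alpha> c pos by simp
  ultimately show ?thesis using sy2 zero_less_mult_pos2 by metis
qed

lemma eventually_card_le_less_card_less:
  fixes g h :: "real \<Rightarrow> nat \<Rightarrow> real"
  assumes I: "finite I" "i0 \<in> I"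
    and g: "\<And>i. i \<in> I \<Longrightarrow> has_second_order_expansion (\<lambda>u. g u i) (a0 i) (a1 i) (a2 i)"
    and h: "\<And>i. i \<in> I \<Longrightarrow> has_second_order_expansion (\<lambda>u. h u i) (a0 i) (a1 i) (b2 i)"
    and crit: "\<And>i. i \<in> I \<Longrightarrow> a0 i = 0 \<Longrightarrow> a1 i = 0 \<Longrightarrow> a2 i < 0 \<or> b2 i > 0"
    and i0: "a0 i0 = 0" "a1 i0 = 0" "a2 i0 < 0" "b2 i0 > 0"
  shows "eventually (\<lambda>u. card {i\<in>I. h u i \<le> 0} < card {i\<in>I. g u i < 0}) (at_right 0)"
proof -
  note g_neg = has_second_order_expansion_eventually_neg[OF g]
  note h_pos = has_second_order_expansion_eventually_pos[OF h]
  have "eventually (\<lambda>u. h u i \<le> 0 \<longrightarrow> g u i < 0) (at_right 0)" if i: "i \<in> I" for i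
  proof -
    consider "a0 i < 0 \<or> a0 i = 0 \<and> (a1 i < 0 \<or> a1 i = 0 \<and> a2 i < 0)"
      | "a0 i > 0 \<or> a0 i = 0 \<and> (a1 i > 0 \<or> a1 i = 0 \<and> b2 i > 0)"
      using crit[OF i] by linarith
    then show ?thesis
    proof cases
      case 1 show ?thesis using g_neg[OF i 1] by eventually_elim simp
    next
      case 2 show ?thesis using h_pos[OF i 2] by eventually_elim simp
    qed
  qed
  then have "eventually (\<lambda>u. \<forall>i\<in>I. h u i \<le> 0 \<longrightarrow> g u i < 0) (at_right 0)"
    by (simp add: eventually_ball_finite_distrib[OF I(1)])
  moreover have "eventually (\<lambda>u. g u i0 < 0) (at_right 0)" "eventually (\<lambda>u. h u i0 > 0) (at_right 0)"
    using g_neg[OF I(2)] h_pos[OF I(2)] i0 by simp_all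
  ultimately show ?thesis
  proof eventually_elim
    case (elim u)
    then have "{i\<in>I. h u i \<le> 0} \<subset> {i\<in>I. g u i < 0}"
      using I(2) by force
    then show ?case by (rule psubset_card_mono[rotated]) (simp add: I(1))
  qed
qed

lemma bloch_angle_shift: "r > 0 \<Longrightarrow> bloch_angle r (\<theta> + real r * t) k = bloch_angle r \<theta> k + t"
  by (simp add: bloch_angle_def field_simps)

lemma has_second_order_expansion_bloch_eigenvalue:
  fixes r i :: nat and \<theta>0 \<phi>0 \<alpha> \<beta> \<gamma> E :: real
  defines "x \<equiv> bloch_angle r \<theta>0 (i div r)" and "y \<equiv> bloch_angle r \<phi>0 (i mod r)"
  assumes "r > 0"
  shows "has_second_order_expansion
     (\<lambda>u. bloch_eigenvalue r (\<theta>0 + real r * (\<alpha>*u)) (\<phi>0 + real r * (\<beta>*u + \<gamma>*u^2)) i - E)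
     (2 * (cos x + cos y) - E) (- 2 * (\<alpha> * sin x + \<beta> * sin y))
     (- (\<alpha>^2 * cos x + \<beta>^2 * cos y) - 2 * \<gamma> * sin y)"
proof -
  have "has_second_order_expansion
     (\<lambda>u. 2 * cos (x + (\<alpha>*u + 0*u^2)) + 2 * cos (y + (\<beta>*u + \<gamma>*u^2)) + (- E))
     (2 * cos x + 2 * cos y + - E) (2 * (- \<alpha> * sin x) + 2 * (- \<beta> * sin y) + 0)
     (2 * (- (0 * sin x + \<alpha>^2 * cos x / 2)) + 2 * (- (\<gamma> * sin y + \<beta>^2 * cos y / 2)) + 0)"
    by (intro has_second_order_expansion_add has_second_order_expansion_cmult
        has_second_order_expansion_cos has_second_order_expansion_const)
  moreover have "(\<lambda>u. 2 * cos (x + (\<alpha>*u + 0*u^2)) + 2 * cos (y + (\<beta>*u + \<gamma>*u^2)) + (- E))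
      = (\<lambda>u. bloch_eigenvalue r (\<theta>0 + real r * (\<alpha>*u)) (\<phi>0 + real r * (\<beta>*u + \<gamma>*u^2)) i - E)"
    using assms(3) by (simp add: fun_eq_iff bloch_eigenvalue_def bloch_angle_shift x_def y_def)
  moreover have "2 * cos x + 2 * cos y + - E = 2 * (cos x + cos y) - E"
    "2 * (- \<alpha> * sin x) + 2 * (- \<beta> * sin y) + 0 = - 2 * (\<alpha> * sin x + \<beta> * sin y)"
    "2 * (- (0 * sin x + \<alpha>^2 * cos x / 2)) + 2 * (- (\<gamma> * sin y + \<beta>^2 * cos y / 2)) + 0
      = - (\<alpha>^2 * cos x + \<beta>^2 * cos y) - 2 * \<gamma> * sin y"
    by (simp_all add: algebra_simps)
  ultimately show ?thesis by (simp only:)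
qed

text \<open>On the curves \<open>u \<mapsto> (\<theta>0 + r\<alpha>u, \<phi>0 + r(\<beta>u + \<kappa>u\<^sup>2))\<close>, \<open>\<kappa> \<in> {0, \<gamma>}\<close>, the eigenvalue \<open>i0\<close> is
  stationary at \<open>u = 0\<close>, and \<open>\<gamma>\<close> is chosen so that its second-order terms on the two curves are opposite.\<close>

lemma interior_band_if_critical_eigenvalue:
  fixes r i0 :: nat and \<theta>0 \<phi>0 \<alpha> \<beta> \<gamma> E :: real
  defines "x \<equiv> \<lambda>i. bloch_angle r \<theta>0 (i div r)" and "y \<equiv> \<lambda>i. bloch_angle r \<phi>0 (i mod r)"
  assumes r: "r \<ge> 2" and E: "E \<noteq> 0"
    and nondeg: "\<And>i. i < r*r \<Longrightarrow> sin (x i) = 0 \<Longrightarrow> sin (y i) = 0 \<Longrightarrow> 2 * (cos (x i) + cos (y i)) \<noteq> E"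
    and i0: "i0 < r*r" "2 * (cos (x i0) + cos (y i0)) = E" "\<alpha> * sin (x i0) + \<beta> * sin (y i0) = 0"
    and \<alpha>: "\<alpha> \<noteq> 0"
    and \<gamma>: "\<gamma> * sin (y i0) = - (\<alpha>^2 * cos (x i0) + \<beta>^2 * cos (y i0))"
    and valid: "eventually (\<lambda>u. \<theta>0 + real r * (\<alpha>*u) \<in> {0..pi} \<and> (\<forall>\<kappa>\<in>{0,\<gamma>}.
                  \<phi>0 + real r * (\<beta>*u + \<kappa>*u^2) \<in> {0..pi})) (at_right 0)"
  shows "\<exists>j \<in> {1..r^2}. E \<in> interior (band r j)"
proof -
  define ev where "ev \<kappa> u i = bloch_eigenvalue r (\<theta>0 + real r * (\<alpha>*u)) (\<phi>0 + real r * (\<beta>*u + \<kappa>*u^2)) i - E"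
    for \<kappa> u i
  define a0 where "a0 i = 2 * (cos (x i) + cos (y i)) - E" for i
  define a1 where "a1 i = - 2 * (\<alpha> * sin (x i) + \<beta> * sin (y i))" for i
  define a2 where "a2 \<kappa> i = - (\<alpha>^2 * cos (x i) + \<beta>^2 * cos (y i)) - 2 * \<kappa> * sin (y i)" for \<kappa> i
  have expansion: "has_second_order_expansion (\<lambda>u. ev \<kappa> u i) (a0 i) (a1 i) (a2 \<kappa> i)" for \<kappa> i
    unfolding ev_def a0_def a1_def a2_def x_def y_def using r
    by (intro has_second_order_expansion_bloch_eigenvalue) simp
  have curvature: "E * a2 0 i < 0" if "i < r*r" "a0 i = 0" "a1 i = 0" for i
  proof -
    have "(cos (x i) + cos (y i)) * (\<alpha>^2 * cos (x i) + \<beta>^2 * cos (y i)) > 0"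
      using that nondeg[OF that(1)] E \<alpha> by (intro critical_curvature_pos) (auto simp: a0_def a1_def)
    moreover have "E = 2 * (cos (x i) + cos (y i))" using that(2) by (simp add: a0_def)
    ultimately show ?thesis by (simp add: a2_def mult_less_0_iff zero_less_mult_iff) linarith
  qed
  have flip: "a2 \<gamma> i0 = - a2 0 i0" using \<gamma> by (simp add: a2_def mult.assoc algebra_simps)
  have i0_crit: "a0 i0 = 0" "a1 i0 = 0" using i0 by (simp_all add: a0_def a1_def)
  \<comment> \<open>By \<open>curvature\<close>, on the curve \<open>\<kappa> = 0\<close> every critical eigenvalue moves from \<open>E\<close> towards \<open>0\<close>,
    so that curve plays the role of \<open>g\<close> or of \<open>h\<close> according to the sign of \<open>E\<close>.\<close>
  define \<kappa>g where "\<kappa>g = (if E > 0 then 0 else \<gamma>)"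
  define \<kappa>h where "\<kappa>h = (if E > 0 then \<gamma> else 0)"
  have "eventually (\<lambda>u. card {i\<in>{..<r*r}. ev \<kappa>h u i \<le> 0} < card {i\<in>{..<r*r}. ev \<kappa>g u i < 0}) (at_right 0)"
  proof (rule eventually_card_le_less_card_less[OF _ _ expansion expansion])
    show "a2 \<kappa>g i < 0 \<or> 0 < a2 \<kappa>h i" if "i \<in> {..<r*r}" "a0 i = 0" "a1 i = 0" for i
      using curvature[of i] that E by (auto simp: \<kappa>g_def \<kappa>h_def mult_less_0_iff)
    show "a2 \<kappa>g i0 < 0" "0 < a2 \<kappa>h i0"
      using curvature[OF i0(1) i0_crit] flip E by (auto simp: \<kappa>g_def \<kappa>h_def mult_less_0_iff)
  qed (use i0 i0_crit in auto)
  with valid have "eventually (\<lambda>u. \<theta>0 + real r * (\<alpha>*u) \<in> {0..pi}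
      \<and> \<phi>0 + real r * (\<beta>*u + \<kappa>h*u^2) \<in> {0..pi} \<and> \<phi>0 + real r * (\<beta>*u + \<kappa>g*u^2) \<in> {0..pi}
      \<and> card {i\<in>{..<r*r}. ev \<kappa>h u i \<le> 0} < card {i\<in>{..<r*r}. ev \<kappa>g u i < 0}) (at_right 0)"
    by eventually_elim (simp add: \<kappa>g_def \<kappa>h_def)
  from eventually_happens[OF this] obtain u where u: "\<theta>0 + real r * (\<alpha>*u) \<in> {0..pi}"
      "\<phi>0 + real r * (\<beta>*u + \<kappa>h*u^2) \<in> {0..pi}" "\<phi>0 + real r * (\<beta>*u + \<kappa>g*u^2) \<in> {0..pi}"
      "card {i\<in>{..<r*r}. ev \<kappa>h u i \<le> 0} < card {i\<in>{..<r*r}. ev \<kappa>g u i < 0}"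
    using trivial_limit_at_right_real[of 0] by auto
  show ?thesis
    by (rule interior_band_if_card_less[OF r u(1,2) u(1,3)]) (use u(4) in \<open>simp add: ev_def\<close>)
qed

section \<open>Energies of \<open>C\<^sub>\<Gamma>\<close>\<close>

text \<open>At \<open>\<theta> = parity_base m \<in> {0, \<pi>}\<close> the angle \<open>\<pi>m/r\<close> is a Bloch angle, and \<open>parity_dir m\<close> points
  from there into \<open>[0, \<pi>]\<close>.\<close>

definition parity_base :: "nat \<Rightarrow> real" where
  "parity_base m = pi * real (m mod 2)"

definition parity_dir :: "nat \<Rightarrow> real" where
  "parity_dir m = 1 - 2 * real (m mod 2)"

lemma parity_dir_cases: "parity_dir m = 1 \<or> parity_dir m = -1"
  by (auto simp: parity_dir_def mod2_eq_if)

lemma parity_base_plus_in_interval: "0 \<le> v \<Longrightarrow> v \<le> pi \<Longrightarrow> parity_base m + parity_dir m * v \<in> {0..pi}"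
  by (cases "m mod 2 = 0") (auto simp: parity_base_def parity_dir_def mod2_eq_if)

lemma bloch_angle_parity_base:
  assumes "r > 0"
  shows "bloch_angle r (parity_base a) (a div 2) = pi * real a / real r"
proof -
  have "real a = real (a mod 2) + 2 * real (a div 2)"
    by (metis div_mult_mod_eq of_nat_add of_nat_mult of_nat_numeral add.commute mult.commute)
  then show ?thesis using assms by (simp add: bloch_angle_def parity_base_def field_simps)
qed

lemma bloch_angle_parity_base_reflected:
  assumes "r > 0" "1 \<le> a" "a \<le> r"
  shows "r - a div 2 - a mod 2 < r"
    and "bloch_angle r (parity_base a) (r - a div 2 - a mod 2) = 2*pi - pi * real a / real r"
proof -
  have "a div 2 + a mod 2 \<le> a" "a div 2 + a mod 2 \<ge> 1" using assms by presburger+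
  then show "r - a div 2 - a mod 2 < r" using assms by linarith
  have "real (r - a div 2 - a mod 2) = real r - real (a div 2) - real (a mod 2)"
    using \<open>a div 2 + a mod 2 \<le> a\<close> assms by (simp add: of_nat_diff)
  moreover have "real a = real (a mod 2) + 2 * real (a div 2)"
    by (metis div_mult_mod_eq of_nat_add of_nat_mult of_nat_numeral add.commute mult.commute)
  ultimately show "bloch_angle r (parity_base a) (r - a div 2 - a mod 2) = 2*pi - pi * real a / real r"
    using assms by (simp add: bloch_angle_def parity_base_def field_simps)
qed

lemma exists_bloch_angle_sin_sign:
  assumes r: "r > 0" and b: "0 < b" "b < r" and t: "t = 1 \<or> t = -1"
  shows "\<exists>l<r. sin (bloch_angle r (parity_base b) l) = - t * sin (pi * real b / real r)
             \<and> cos (bloch_angle r (parity_base b) l) = cos (pi * real b / real r)"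
proof -
  have "b div 2 < r" using b by linarith
  moreover have "bloch_angle r (parity_base b) (b div 2) = pi * real b / real r"
    by (rule bloch_angle_parity_base[OF r])
  moreover note bloch_angle_parity_base_reflected[OF r, of b]
  ultimately show ?thesis using t b by auto
qed

lemma eventually_quadratic_in_interval:
  fixes \<rho> \<kappa> c :: real
  assumes "\<rho> > 0 \<or> \<rho> = 0 \<and> \<kappa> \<ge> 0" and "c > 0"
  shows "eventually (\<lambda>u. 0 \<le> \<rho>*u + \<kappa>*u^2 \<and> \<rho>*u + \<kappa>*u^2 \<le> c) (at_right 0)"
proof -
  have "((\<lambda>u. \<rho>*u + \<kappa>*u^2) \<longlongrightarrow> 0) (at_right 0)" by (auto intro!: tendsto_eq_intros)
  then have upper: "eventually (\<lambda>u. \<rho>*u + \<kappa>*u^2 < c) (at_right 0)"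
    using order_tendstoD(2) assms(2) by blast
  have "eventually (\<lambda>u. 0 \<le> \<rho> + \<kappa>*u) (at_right 0)"
  proof (cases "\<rho> > 0")
    case True
    have "((\<lambda>u. \<rho> + \<kappa>*u) \<longlongrightarrow> \<rho>) (at_right 0)" by (auto intro!: tendsto_eq_intros)
    from order_tendstoD(1)[OF this True] show ?thesis by eventually_elim simp
  next
    case False
    with assms(1) eventually_at_right_less[of "0::real"] show ?thesis
      by (auto elim: eventually_mono)
  qed
  with eventually_at_right_less[of "0::real"] have lower: "eventually (\<lambda>u. 0 \<le> \<rho>*u + \<kappa>*u^2) (at_right 0)"
  proof eventually_elim
    case (elim u)
    then have "0 \<le> u * (\<rho> + \<kappa>*u)" by simp
    then show ?case by (simp add: algebra_simps power2_eq_square)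
  qed
  from upper lower show ?thesis by eventually_elim simp
qed

lemma eventually_parity_curves_in_interval:
  assumes r: "r > 0" and \<rho>: "\<rho> > 0 \<or> \<rho> = 0 \<and> \<kappa> \<ge> 0"
  shows "eventually (\<lambda>u. parity_base a + real r * (parity_dir a * u) \<in> {0..pi} \<and> (\<forall>\<gamma>\<in>{0, parity_dir b * \<kappa>}.
            parity_base b + real r * (parity_dir b * \<rho> * u + \<gamma>*u^2) \<in> {0..pi})) (at_right 0)"
proof -
  have "eventually (\<lambda>u. 0 \<le> 1*u + 0*u^2 \<and> 1*u + 0*u^2 \<le> pi / real r) (at_right 0)"
    "eventually (\<lambda>u. 0 \<le> \<rho>*u + 0*u^2 \<and> \<rho>*u + 0*u^2 \<le> pi / real r) (at_right 0)"
    "eventually (\<lambda>u. 0 \<le> \<rho>*u + \<kappa>*u^2 \<and> \<rho>*u + \<kappa>*u^2 \<le> pi / real r) (at_right 0)"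
    using \<rho> r by (intro eventually_quadratic_in_interval; auto)+
  then show ?thesis
  proof eventually_elim
    case (elim u)
    have "real r * u \<le> pi" using elim r by (simp add: field_simps)
    then have \<theta>: "parity_base a + real r * (parity_dir a * u) \<in> {0..pi}"
      using elim parity_base_plus_in_interval[of "real r * u"] by (simp add: mult.left_commute)
    have \<phi>: "parity_base b + real r * (parity_dir b * \<rho> * u + (parity_dir b * \<kappa>')*u^2) \<in> {0..pi}"
      if "0 \<le> \<rho>*u + \<kappa>'*u^2" "\<rho>*u + \<kappa>'*u^2 \<le> pi / real r" for \<kappa>'
    proof -
      have "real r * (\<rho>*u + \<kappa>'*u^2) \<le> pi" using that r by (simp add: field_simps)
      then have "parity_base b + parity_dir b * (real r * (\<rho>*u + \<kappa>'*u^2)) \<in> {0..pi}"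
        using that parity_base_plus_in_interval by simp
      then show ?thesis by (simp add: algebra_simps)
    qed
    show ?case using \<theta> \<phi>[of 0] \<phi>[of \<kappa>] elim by auto
  qed
qed

lemma cos_eq_pm1_if_sin_eq_0: "sin (t::real) = 0 \<Longrightarrow> cos t = 1 \<or> cos t = -1"
  using sin_cos_squared_add[of t] by (simp add: power2_eq_1_iff)

lemma interior_band_if_parity_critical_eigenvalue:
  fixes r a b l :: nat and E \<rho> \<kappa> :: real
  defines "y \<equiv> bloch_angle r (parity_base b) l"
  assumes r: "r \<ge> 2" and a: "a \<le> r" and l: "l < r"
    and E_eq: "E = 2 * cos (pi * real a / real r) + 2 * cos y" and E: "E \<notin> {-4, 0, 4}"
    and \<rho>: "\<rho> > 0 \<or> \<rho> = 0 \<and> \<kappa> \<ge> 0"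
    and crit: "parity_dir a * sin (pi * real a / real r) + parity_dir b * \<rho> * sin y = 0"
    and \<kappa>: "parity_dir b * \<kappa> * sin y = - (cos (pi * real a / real r) + \<rho>^2 * cos y)"
  shows "\<exists>j \<in> {1..r^2}. E \<in> interior (band r j)"
proof (rule interior_band_if_critical_eigenvalue[where ?i0.0 = "a div 2 * r + l" and \<alpha> = "parity_dir a"
      and \<beta> = "parity_dir b * \<rho>" and \<gamma> = "parity_dir b * \<kappa>"])
  have "r > 0" using r by simp
  have idx: "(a div 2 * r + l) div r = a div 2" "(a div 2 * r + l) mod r = l" "l mod r = l" using l by auto
  note angles = idx bloch_angle_parity_base[OF \<open>r > 0\<close>] y_def[symmetric]
  have "a div 2 * r + l < (a div 2 + 1) * r" using l by simp
  also have "\<dots> \<le> r * r" using a r by (intro mult_right_mono) auto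
  finally show "a div 2 * r + l < r * r" .
  show "2 * (cos (bloch_angle r (parity_base a) ((a div 2 * r + l) div r))
      + cos (bloch_angle r (parity_base b) ((a div 2 * r + l) mod r))) = E"
    using E_eq by (simp add: angles)
  show "parity_dir a * sin (bloch_angle r (parity_base a) ((a div 2 * r + l) div r))
      + parity_dir b * \<rho> * sin (bloch_angle r (parity_base b) ((a div 2 * r + l) mod r)) = 0"
    using crit by (simp add: angles)
  show "parity_dir b * \<kappa> * sin (bloch_angle r (parity_base b) ((a div 2 * r + l) mod r))
      = - ((parity_dir a)^2 * cos (bloch_angle r (parity_base a) ((a div 2 * r + l) div r))
           + (parity_dir b * \<rho>)^2 * cos (bloch_angle r (parity_base b) ((a div 2 * r + l) mod r)))"
    using \<kappa> parity_dir_cases[of a] parity_dir_cases[of b] by (auto simp: angles power_mult_distrib)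
  show "parity_dir a \<noteq> 0" using parity_dir_cases[of a] by auto
  show "2 * (cos (bloch_angle r (parity_base a) (i div r)) + cos (bloch_angle r (parity_base b) (i mod r))) \<noteq> E"
    if "sin (bloch_angle r (parity_base a) (i div r)) = 0" "sin (bloch_angle r (parity_base b) (i mod r)) = 0" for i
    using cos_eq_pm1_if_sin_eq_0[OF that(1)] cos_eq_pm1_if_sin_eq_0[OF that(2)] E by auto
  show "eventually (\<lambda>u. parity_base a + real r * (parity_dir a * u) \<in> {0..pi} \<and> (\<forall>\<gamma>\<in>{0, parity_dir b * \<kappa>}.
      parity_base b + real r * (parity_dir b * \<rho> * u + \<gamma> * u^2) \<in> {0..pi})) (at_right 0)"
    using \<open>r > 0\<close> \<rho> by (rule eventually_parity_curves_in_interval)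
qed (use r E in simp_all)

lemma interior_band_if_lattice_energy:
  fixes r a b :: nat and E :: real
  assumes r: "r \<ge> 2" and a: "a \<le> r" and b: "0 < b" "b < r"
    and E_eq: "E = 2 * cos (pi * real a / real r) + 2 * cos (pi * real b / real r)"
    and E: "E \<notin> {-4, 0, 4}"
  shows "\<exists>j \<in> {1..r^2}. E \<in> interior (band r j)"
proof -
  define ca where "ca = cos (pi * real a / real r)"
  define cb where "cb = cos (pi * real b / real r)"
  define sb where "sb = sin (pi * real b / real r)"
  have sb: "sb > 0" unfolding sb_def using b by (intro sin_gt_zero) (auto simp: field_simps)
  note pick = exists_bloch_angle_sin_sign[of r b, folded sb_def cb_def]
  note reduce = interior_band_if_parity_critical_eigenvalue[OF r a, where b = b, folded ca_def]
  note \<alpha> = parity_dir_cases[of a] and s = parity_dir_cases[of b]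
  show ?thesis
  proof (cases "0 < a \<and> a < r")
    case True
    define sa where "sa = sin (pi * real a / real r)"
    have sa: "sa > 0" unfolding sa_def using True by (intro sin_gt_zero) (auto simp: field_simps)
    have "parity_dir a * parity_dir b = 1 \<or> parity_dir a * parity_dir b = -1" using \<alpha> s by auto
    then obtain l where l: "l < r" "cos (bloch_angle r (parity_base b) l) = cb"
      "sin (bloch_angle r (parity_base b) l) = - (parity_dir a * parity_dir b) * sb"
      using pick b r by auto
    show ?thesis
    proof (rule reduce[OF l(1), where \<rho> = "sa / sb"
          and \<kappa> = "- (ca + (sa / sb)^2 * cb) / (parity_dir b * sin (bloch_angle r (parity_base b) l))"])
      show "parity_dir a * sin (pi * real a / real r) + parity_dir b * (sa / sb) * sin (bloch_angle r (parity_base b) l) = 0"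
        using l(3) sb \<alpha> s by (auto simp: sa_def)
      show "parity_dir b * (- (ca + (sa / sb)^2 * cb) / (parity_dir b * sin (bloch_angle r (parity_base b) l)))
          * sin (bloch_angle r (parity_base b) l) = - (ca + (sa / sb)^2 * cos (bloch_angle r (parity_base b) l))"
        using l sb s \<alpha> by auto
    qed (use E_eq E l sa sb in \<open>simp_all add: ca_def cb_def\<close>)
  next
    case False
    then have "a = 0 \<or> a = r" using a by auto
    then have ca: "ca = 1 \<or> ca = -1" and sa: "sin (pi * real a / real r) = 0"
      using r by (auto simp: ca_def)
    have "parity_dir b * ca = 1 \<or> parity_dir b * ca = -1" using ca s by auto
    then obtain l where l: "l < r" "cos (bloch_angle r (parity_base b) l) = cb"
      "sin (bloch_angle r (parity_base b) l) = - (parity_dir b * ca) * sb"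
      using pick b r by auto
    show ?thesis
    proof (rule reduce[OF l(1), where \<rho> = 0 and \<kappa> = "1 / sb"])
      show "parity_dir b * (1 / sb) * sin (bloch_angle r (parity_base b) l) = - (ca + 0^2 * cos (bloch_angle r (parity_base b) l))"
        using l(3) sb s ca by auto
    qed (use E_eq E l sa sb in \<open>simp_all add: ca_def cb_def\<close>)
  qed
qed

theorem proposition3p3:
  fixes r :: nat and E :: real
  assumes "r > 0" and "even r"
    and "E \<in> CGamma r - {-4, 0, 4}"
  shows "\<exists>j \<in> {1..r^2}. E \<in> interior (band r j)"
proof -
  \<comment> \<open>Evenness is only needed to exclude \<open>r = 1\<close>.\<close>
  have r: "r \<ge> 2" using assms(1,2) by presburger
  have E: "E \<notin> {-4, 0, 4}" using assms(3) by simp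
  from assms(3) obtain a b where ab: "a \<le> r" "b \<le> r"
    and E_eq: "E = 2 * cos (pi * real a / real r) + 2 * cos (pi * real b / real r)"
    unfolding CGamma_def Cr_def by blast
  have endpoint: "cos (pi * real x / real r) \<in> {-1, 1}" if "x = 0 \<or> x = r" for x
    using that assms(1) by auto
  consider "0 < b \<and> b < r" | "0 < a \<and> a < r" | "(a = 0 \<or> a = r) \<and> (b = 0 \<or> b = r)"
    using ab by linarith
  then show ?thesis
  proof cases
    case 1
    then show ?thesis using interior_band_if_lattice_energy[OF r ab(1) _ _ E_eq E] by blast
  next
    case 2
    then show ?thesis using interior_band_if_lattice_energy[OF r ab(2) _ _ _ E] E_eq by (simp add: add.commute)
  next
    case 3
    then show ?thesis using endpoint[of a] endpoint[of b] E E_eq by auto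
  qed
qed

end
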